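(* Let $V$ be a finite-dimensional vector space over a field of characteristic zero, and let $A^{a_1\dots a_p}$ and $B_{a_1\dots a_p}$ be $p$-forms (totally antisymmetric tensors, $A$ contravariant and $B$ covariant), with $A$ simple. Let $P^a{}_b=A^{ac_2\dots c_p}B_{bc_2\dots c_p}$. Then $$P\Bigl(P-\frac{1}{p}[P]\Bigr)=0.$$
   Context: Index-free notation for $(1,1)$-tensors: $P$ denotes $P^a{}_b$, products denote composition (e.g. $P^2=P^a{}_cP^c{}_b$), $[P]=P^c{}_c$ is the trace, and a scalar term in a tensor equation is understood as multiplied by the identity $\delta^a_b$. A $p$-form $A$ is simple if $A^{a_1\dots a_p}=u^{[a_1}\cdots w^{a_p]}$ for some vectors $u,\dots,w$, where square brackets denote antisymmetrisation. No metric is assumed. *)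

theory Defs
  imports Main "HOL-Combinatorics.Permutations"
begin

text \<open>Coordinates: V has a basis indexed by the finite type 'n; scalars in a field 'a of
characteristic zero. A tensor with p indices is a function on index lists, only its values
on lists of length p matter.\<close>

definition antisym_form :: "nat \<Rightarrow> ('n list \<Rightarrow> 'a::field) \<Rightarrow> bool" where
  "antisym_form p A \<longleftrightarrow>
     (\<forall>xs \<sigma>. length xs = p \<longrightarrow> \<sigma> permutes {..<p} \<longrightarrow>
        A (map (\<lambda>k. xs ! \<sigma> k) [0..<p]) = of_int (sign \<sigma>) * A xs)"

definition simple_form :: "nat \<Rightarrow> ('n list \<Rightarrow> 'a::field) \<Rightarrow> bool" where
  "simple_form p A \<longleftrightarrow>
     (\<exists>u :: nat \<Rightarrow> 'n \<Rightarrow> 'a. \<forall>xs. length xs = p \<longrightarrow>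
        A xs = (1 / of_nat (fact p)) *
          (\<Sum>\<sigma>\<in>{\<sigma>. \<sigma> permutes {..<p}}. of_int (sign \<sigma>) * (\<Prod>k<p. u (\<sigma> k) (xs ! k))))"

definition contract :: "nat \<Rightarrow> ('n::finite list \<Rightarrow> 'a::field) \<Rightarrow> ('n list \<Rightarrow> 'a) \<Rightarrow> 'n \<Rightarrow> 'n \<Rightarrow> 'a" where
  "contract p A B a b = (\<Sum>cs\<in>{cs. length cs = p - 1}. A (a # cs) * B (b # cs))"

definition tr11 :: "('n::finite \<Rightarrow> 'n \<Rightarrow> 'a::field) \<Rightarrow> 'a" where
  "tr11 P = (\<Sum>c\<in>UNIV. P c c)"

definition comp11 :: "('n::finite \<Rightarrow> 'n \<Rightarrow> 'a::field) \<Rightarrow> ('n \<Rightarrow> 'n \<Rightarrow> 'a) \<Rightarrow> 'n \<Rightarrow> 'n \<Rightarrow> 'a" where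
  "comp11 P Q a b = (\<Sum>c\<in>UNIV. P a c * Q c b)"

definition delta11 :: "'n \<Rightarrow> 'n \<Rightarrow> 'a::field" where
  "delta11 a b = (if a = b then 1 else 0)"

end

theory Submission
  imports Defs
begin

(* Write the simple form as A = u_0 \<and> ... \<and> u_m with p = m + 1. Grouping the permutations in
   its expansion by the vector that receives the free index gives P = (1/p!) \<Sum>_i u_i \<otimes> \<beta>_i,
   where \<beta>_i is, up to sign and a factor m!, the covector B(-, u_0, ..., u_m) with u_i omitted.
   Antisymmetry of B makes \<beta>_i(u_j) vanish for i \<noteq> j and equal to m! B(u_0, ..., u_m) for
   i = j, so the u_i and \<beta>_i are dual up to one common scalar \<mu>. Hence P\<^sup>2 = \<mu> P and
   [P] = p \<mu>, which gives P (P - [P]/p) = 0. *)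

definition eval_form :: "nat \<Rightarrow> ('n list \<Rightarrow> 'a::comm_semiring_1) \<Rightarrow> (nat \<Rightarrow> 'n \<Rightarrow> 'a) \<Rightarrow> 'a" where
  "eval_form p B v = (\<Sum>xs | length xs = p. B xs * (\<Prod>k<p. v k (xs ! k)))"

lemma sum_lists_length_Suc:
  fixes f :: "'n::finite list \<Rightarrow> 'a::comm_monoid_add"
  shows "(\<Sum>xs | length xs = Suc m. f xs) = (\<Sum>c\<in>UNIV. \<Sum>cs | length cs = m. f (c # cs))"
proof -
  have "(\<Sum>c\<in>UNIV. \<Sum>cs | length cs = m. f (c # cs))
      = (\<Sum>(c, cs) \<in> UNIV \<times> {cs. length cs = m}. f (c # cs))"
    by (simp add: sum.cartesian_product)
  also have "\<dots> = (\<Sum>xs | length xs = Suc m. f xs)"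
    by (rule sum.reindex_bij_witness[of _ "\<lambda>xs. (hd xs, tl xs)" "\<lambda>(c, cs). c # cs"])
       (auto simp: length_Suc_conv)
  finally show ?thesis ..
qed

lemma eval_form_Suc:
  fixes B :: "'n::finite list \<Rightarrow> 'a::comm_semiring_1"
  shows "eval_form (Suc m) B v
       = (\<Sum>c\<in>UNIV. v 0 c * eval_form m (\<lambda>cs. B (c # cs)) (\<lambda>k. v (Suc k)))"
  unfolding eval_form_def sum_lists_length_Suc
  by (simp add: prod.lessThan_Suc_shift sum_distrib_left mult_ac del: prod.lessThan_Suc)

lemma antisym_form_permute_list:
  assumes "antisym_form p B" "length xs = p" "\<sigma> permutes {..<p}"
  shows "B (permute_list \<sigma> xs) = of_int (sign \<sigma>) * B xs"
  using assms unfolding antisym_form_def permute_list_def by auto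

lemma sum_lists_permute_list:
  assumes \<sigma>: "\<sigma> permutes {..<p}"
  shows "(\<Sum>xs | length xs = p. f (permute_list \<sigma> xs)) = (\<Sum>xs | length xs = p. f xs)"
proof -
  have inv: "inv \<sigma> permutes {..<p}"
    using \<sigma> by (rule permutes_inv)
  have "permute_list (inv \<sigma>) (permute_list \<sigma> xs) = xs"
    and "permute_list \<sigma> (permute_list (inv \<sigma>) xs) = xs" if "length xs = p" for xs
    using permute_list_compose[of \<sigma> xs "inv \<sigma>"] permute_list_compose[of "inv \<sigma>" xs \<sigma>]
      \<sigma> inv that by (simp_all add: permutes_inv_o)
  then show ?thesis
    by (intro sum.reindex_bij_witness[of _ "permute_list (inv \<sigma>)" "permute_list \<sigma>"]) auto
qed

lemma eval_form_permute:
  fixes B :: "'n list \<Rightarrow> 'a::field"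
  assumes B: "antisym_form p B" and \<pi>: "\<pi> permutes {..<p}"
  shows "eval_form p B (v \<circ> \<pi>) = of_int (sign \<pi>) * eval_form p B v"
proof -
  have "eval_form p B (v \<circ> \<pi>)
      = (\<Sum>xs | length xs = p.
           B (permute_list \<pi> xs) * (\<Prod>k<p. v (\<pi> k) (permute_list \<pi> xs ! k)))"
    unfolding eval_form_def comp_def
    by (rule sum_lists_permute_list[OF \<pi>, symmetric, of "\<lambda>xs. B xs * (\<Prod>k<p. v (\<pi> k) (xs ! k))"])
  also have "\<dots> = (\<Sum>xs | length xs = p. of_int (sign \<pi>) * B xs * (\<Prod>k<p. v (\<pi> k) (xs ! \<pi> k)))"
    using antisym_form_permute_list[OF B _ \<pi>] \<pi>
    by (intro sum.cong prod.cong) (auto simp: permute_list_nth)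
  also have "\<dots> = (\<Sum>xs | length xs = p. of_int (sign \<pi>) * B xs * (\<Prod>k<p. v k (xs ! k)))"
    using prod.permute[OF \<pi>, of "\<lambda>k. v k (_ ! k)"] by (simp add: comp_def)
  finally show ?thesis
    by (simp add: eval_form_def sum_distrib_left mult.assoc)
qed

lemma eval_form_eq_0_if_repeated:
  fixes B :: "'n list \<Rightarrow> 'a::field_char_0"
  assumes B: "antisym_form p B" and "i < p" "j < p" "i \<noteq> j" "v i = v j"
  shows "eval_form p B v = 0"
proof -
  have "v \<circ> transpose i j = v"
    using assms by (auto simp: fun_eq_iff transpose_def)
  then have "eval_form p B v = - eval_form p B v"
    using eval_form_permute[OF B, of "transpose i j" v] assms
    by (simp add: permutes_swap_id sign_swap_id)
  then show ?thesis
    by simp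
qed

lemma card_permutes_with_value:
  assumes "finite S" "a \<in> S" "b \<in> S"
  shows "card {\<sigma>. \<sigma> permutes S \<and> \<sigma> a = b} = fact (card S - 1)"
proof -
  let ?f = "\<lambda>\<sigma>. if \<sigma> a = b then 1 else 0 :: nat"
  have S: "insert a (S - {a}) = S"
    using assms(2) by blast
  have "card {\<sigma>. \<sigma> permutes S \<and> \<sigma> a = b} = (\<Sum>\<sigma> | \<sigma> permutes S. ?f \<sigma>)"
    by (simp add: sum.If_cases finite_permutations assms(1) Collect_conj_eq Int_commute)
  also have "\<dots> = (\<Sum>c\<in>S. \<Sum>q | q permutes S - {a}. ?f (transpose a c \<circ> q))"
    using sum_over_permutations_insert[of "S - {a}" a ?f] assms(1) by (simp only: S) simp
  also have "\<dots> = (\<Sum>c\<in>S. \<Sum>q | q permutes S - {a}. if c = b then 1 else 0)"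
    by (intro sum.cong refl) (simp add: permutes_not_in)
  also have "\<dots> = fact (card S - 1)"
    using assms by (simp add: card_permutations if_distrib cong: if_cong)
  finally show ?thesis .
qed

(* Up to the sign (-1)^i and the factor m!, this is B(b, u_0, ..., u_m) with u_i omitted. *)
definition dual_covector :: "nat \<Rightarrow> ('n list \<Rightarrow> 'a::comm_ring_1) \<Rightarrow> (nat \<Rightarrow> 'n \<Rightarrow> 'a) \<Rightarrow> nat \<Rightarrow> 'n \<Rightarrow> 'a" where
  "dual_covector m B u i b =
     (\<Sum>\<sigma> | \<sigma> permutes {..<Suc m} \<and> \<sigma> 0 = i.
        of_int (sign \<sigma>) * eval_form m (\<lambda>cs. B (b # cs)) (\<lambda>k. u (\<sigma> (Suc k))))"

lemma contract_simple_form: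
  fixes A B :: "'n::finite list \<Rightarrow> 'a::field"
  assumes A: "\<And>xs. length xs = Suc m \<Longrightarrow>
    A xs = c * (\<Sum>\<sigma> | \<sigma> permutes {..<Suc m}. of_int (sign \<sigma>) * (\<Prod>k<Suc m. u (\<sigma> k) (xs ! k)))"
  shows "contract (Suc m) A B a b = c * (\<Sum>i<Suc m. u i a * dual_covector m B u i b)"
proof -
  let ?S = "{\<sigma>. \<sigma> permutes {..<Suc m}}"
  let ?F = "\<lambda>\<sigma>. eval_form m (\<lambda>cs. B (b # cs)) (\<lambda>k. u (\<sigma> (Suc k)))"
  have "contract (Suc m) A B a b
      = (\<Sum>cs | length cs = m. c * (\<Sum>\<sigma>\<in>?S. of_int (sign \<sigma>) * u (\<sigma> 0) a *
           (B (b # cs) * (\<Prod>k<m. u (\<sigma> (Suc k)) (cs ! k)))))"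
    unfolding contract_def using A
    by (intro sum.cong)
       (simp_all add: prod.lessThan_Suc_shift sum_distrib_left sum_distrib_right mult_ac
         del: prod.lessThan_Suc)
  also have "\<dots> = c * (\<Sum>\<sigma>\<in>?S. of_int (sign \<sigma>) * u (\<sigma> 0) a * ?F \<sigma>)"
    unfolding eval_form_def by (simp add: sum_distrib_left sum.swap[of _ _ ?S])
  also have "\<dots> = c * (\<Sum>i<Suc m. \<Sum>\<sigma>\<in>{\<sigma>\<in>?S. \<sigma> 0 = i}.
                                    of_int (sign \<sigma>) * u (\<sigma> 0) a * ?F \<sigma>)"
  proof -
    have "(\<lambda>\<sigma>. \<sigma> 0) ` ?S \<subseteq> {..<Suc m}"
      using permutes_in_image[of _ "{..<Suc m}" 0] by auto
    then show ?thesis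
      by (intro arg_cong[where f = "(*) c"]
          sum.group[OF finite_permutations[OF finite_lessThan] finite_lessThan, symmetric])
  qed
  also have "\<dots> = c * (\<Sum>i<Suc m. \<Sum>\<sigma> | \<sigma> permutes {..<Suc m} \<and> \<sigma> 0 = i.
                                    of_int (sign \<sigma>) * u i a * ?F \<sigma>)"
    by (intro arg_cong[where f = "(*) c"] sum.cong) auto
  finally show ?thesis
    by (simp add: dual_covector_def sum_distrib_left mult_ac)
qed

lemma dual_covector_apply:
  fixes B :: "'n::finite list \<Rightarrow> 'a::field_char_0"
  assumes B: "antisym_form (Suc m) B" and "i < Suc m" "j < Suc m"
  shows "(\<Sum>c\<in>UNIV. dual_covector m B u i c * u j c)
       = (if i = j then of_nat (fact m) * eval_form (Suc m) B u else 0)"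
proof -
  let ?I = "{\<sigma>. \<sigma> permutes {..<Suc m} \<and> \<sigma> 0 = i}"
  have eval_updated: "eval_form (Suc m) B (u \<circ> \<sigma>(0 := j))
      = (if i = j then of_int (sign \<sigma>) * eval_form (Suc m) B u else 0)"
    if \<sigma>: "\<sigma> permutes {..<Suc m}" "\<sigma> 0 = i" for \<sigma>
  proof (cases "i = j")
    case True
    with \<sigma> show ?thesis
      using eval_form_permute[OF B, of \<sigma> u] by (simp add: fun_upd_idem)
  next
    case False
    obtain k where "k < Suc m" "\<sigma> k = j"
      using \<open>j < Suc m\<close> permutes_image[OF \<sigma>(1)] by (metis imageE lessThan_iff)
    with False \<sigma>(2) have "k \<noteq> 0"
      by metis
    moreover have "(u \<circ> \<sigma>(0 := j)) 0 = (u \<circ> \<sigma>(0 := j)) k"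
      using \<open>k \<noteq> 0\<close> \<open>\<sigma> k = j\<close> by simp
    ultimately show ?thesis
      using eval_form_eq_0_if_repeated[OF B, of 0 k] False \<open>k < Suc m\<close> by auto
  qed
  have "(\<Sum>c\<in>UNIV. dual_covector m B u i c * u j c)
      = (\<Sum>\<sigma>\<in>?I. of_int (sign \<sigma>) * eval_form (Suc m) B (u \<circ> \<sigma>(0 := j)))"
    unfolding dual_covector_def eval_form_Suc
    by (simp add: sum_distrib_left sum_distrib_right sum.swap[of _ UNIV] mult_ac)
  also have "\<dots> = (if i = j then of_nat (card ?I) * eval_form (Suc m) B u else 0)"
    using eval_updated by (simp add: mult.assoc[symmetric] of_int_mult[symmetric])
  also have "card ?I = fact m"
    using card_permutes_with_value[of "{..<Suc m}" 0 i] \<open>i < Suc m\<close> by simp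
  finally show ?thesis .
qed

lemma
  fixes u \<beta> :: "nat \<Rightarrow> 'n::finite \<Rightarrow> 'a::field"
  assumes P: "P = (\<lambda>a b. \<Sum>i<n. u i a * \<beta> i b)"
    and dual: "\<And>i j. i < n \<Longrightarrow> j < n \<Longrightarrow>
      (\<Sum>c\<in>UNIV. \<beta> i c * u j c) = (if i = j then \<mu> else 0)"
  shows comp11_sum_dyads: "comp11 P P = (\<lambda>a b. \<mu> * P a b)"
    and tr11_sum_dyads: "tr11 P = of_nat n * \<mu>"
proof (rule ext, rule ext)
  fix a b
  have "comp11 P P a b = (\<Sum>c\<in>UNIV. \<Sum>i<n. \<Sum>j<n. u i a * \<beta> j b * (\<beta> i c * u j c))"
    unfolding comp11_def P by (simp add: sum_product mult_ac)
  also have "\<dots> = (\<Sum>i<n. \<Sum>j<n. u i a * \<beta> j b * (\<Sum>c\<in>UNIV. \<beta> i c * u j c))"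
    by (subst sum.swap, rule sum.cong[OF refl], subst sum.swap) (simp add: sum_distrib_left)
  also have "\<dots> = (\<Sum>i<n. \<Sum>j<n. if i = j then \<mu> * (u i a * \<beta> j b) else 0)"
    by (intro sum.cong refl) (simp add: dual)
  also have "\<dots> = \<mu> * P a b"
    unfolding P by (simp add: sum_distrib_left mult_ac)
  finally show "comp11 P P a b = \<mu> * P a b" .
next
  have "tr11 P = (\<Sum>i<n. \<Sum>c\<in>UNIV. \<beta> i c * u i c)"
    unfolding tr11_def P by (subst sum.swap) (simp add: mult.commute)
  then show "tr11 P = of_nat n * \<mu>"
    using dual by simp
qed

lemma comp11_trace_free_eq_0:
  fixes P :: "'n::finite \<Rightarrow> 'n \<Rightarrow> 'a::field_char_0"
  assumes "comp11 P P = (\<lambda>a b. \<mu> * P a b)" "tr11 P = of_nat n * \<mu>" "n \<noteq> 0"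
  shows "comp11 P (\<lambda>a b. P a b - 1 / of_nat n * tr11 P * delta11 a b) = (\<lambda>a b. 0)"
proof (rule ext, rule ext)
  fix a b
  let ?t = "1 / of_nat n * tr11 P"
  have "comp11 P (\<lambda>a b. P a b - ?t * delta11 a b) a b
      = (\<Sum>c\<in>UNIV. P a c * P c b - ?t * (P a c * delta11 c b))"
    unfolding comp11_def by (simp add: right_diff_distrib mult_ac)
  also have "\<dots> = comp11 P P a b - ?t * (\<Sum>c\<in>UNIV. P a c * delta11 c b)"
    unfolding comp11_def by (simp add: sum_subtractf sum_distrib_left)
  also have "(\<Sum>c\<in>UNIV. P a c * delta11 c b) = P a b"
    by (simp add: delta11_def if_distrib cong: if_cong)
  finally show "comp11 P (\<lambda>a b. P a b - ?t * delta11 a b) a b = 0"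
    using assms by simp
qed

theorem lemma1:
  fixes p :: nat
    and A B :: "'n::finite list \<Rightarrow> 'a::field_char_0"
  assumes "p \<ge> 1"
    and "antisym_form p A" and "antisym_form p B"
    and "simple_form p A"
  shows "comp11 (contract p A B)
           (\<lambda>a b. contract p A B a b - (1 / of_nat p) * tr11 (contract p A B) * delta11 a b)
         = (\<lambda>a b. 0)"
proof -
  obtain m where p: "p = Suc m"
    using assms(1) by (cases p) auto
  obtain u :: "nat \<Rightarrow> 'n \<Rightarrow> 'a" where A: "\<And>xs. length xs = Suc m \<Longrightarrow>
      A xs = 1 / of_nat (fact p) *
        (\<Sum>\<sigma> | \<sigma> permutes {..<Suc m}. of_int (sign \<sigma>) * (\<Prod>k<Suc m. u (\<sigma> k) (xs ! k)))"
    using assms(4) unfolding simple_form_def p by blast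
  define \<beta> where "\<beta> i b = 1 / of_nat (fact p) * dual_covector m B u i b" for i b
  have P: "contract p A B = (\<lambda>a b. \<Sum>i<p. u i a * \<beta> i b)"
    by (simp add: fun_eq_iff p contract_simple_form[OF A] \<beta>_def sum_distrib_left mult_ac
        del: sum.lessThan_Suc)
  have dual: "(\<Sum>c\<in>UNIV. \<beta> i c * u j c)
      = (if i = j then 1 / of_nat (fact p) * of_nat (fact m) * eval_form p B u else 0)"
    if "i < p" "j < p" for i j
  proof -
    have "(\<Sum>c\<in>UNIV. \<beta> i c * u j c)
        = 1 / of_nat (fact p) * (\<Sum>c\<in>UNIV. dual_covector m B u i c * u j c)"
      by (simp only: \<beta>_def sum_distrib_left mult.assoc)
    then show ?thesis
      using dual_covector_apply[OF assms(3)[unfolded p], of i j u] that by (simp add: p)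
  qed
  show ?thesis
    using comp11_trace_free_eq_0[OF comp11_sum_dyads[OF P dual] tr11_sum_dyads[OF P dual]] p
    by simp
qed

end
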